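(* Let $V(x)$ be a real function, $\epsilon$ a real constant, and let $w(x)$ be a solution of the Riccati equation $$w'+w^2=V(x)-\epsilon .$$ Let $\gamma(x)$ be a never vanishing differentiable function defined on the domain of $V(x)$. If $v(x)$ is a solution of the Riccati equation $$v'+v^2=V(x)+\frac{1}{\gamma^2(x)}-\epsilon$$ which is defined on the same domain as $w(x)$ and such that $w(x)-v(x)$ does not vanish, then the function $$\overline w(x)=-v(x)-\frac{1/\gamma^2(x)}{w(x)-v(x)}+\frac{\gamma'(x)}{\gamma(x)}$$ is a solution of the Riccati equation $$\overline w'+\overline w^{\,2}=V(x)-2\left(\frac{\gamma'}{\gamma}\,v+v'\right)+\frac{\gamma''}{\gamma}-\epsilon .$$
   Context: Primes denote derivatives with respect to the real independent variable $x$. The function $\gamma$ is implicitly required to be twice differentiable, since $\gamma''$ appears in the conclusion. *)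

theory Defs
  imports Complex_Main
begin

end

(* Write c = 1 / \<gamma>\<^sup>2, h = \<gamma>' / \<gamma> and a = c / (w - v), so that the new function is
   -v - a + h. Subtracting the two Riccati equations shows that w - v solves the linear
   equation u' = -(w + v) u - c, hence a' = c' / (w - v) + (w + v) a + a\<^sup>2, with c' = -2 h c
   and h' = \<gamma>'' / \<gamma> - h\<^sup>2. Adding the square of -v - a + h to its derivative, every term in a
   cancels except a (w - v) = c, and the Riccati equation for v absorbs c. *)
theory Submission
  imports Defs
begin

lemma DERIV_inverse_square:
  fixes \<gamma> :: "'a::real_normed_field \<Rightarrow> 'a"
  assumes "(\<gamma> has_field_derivative \<gamma>') (at x within S)" and "\<gamma> x \<noteq> 0"
  shows "((\<lambda>y. 1 / (\<gamma> y)\<^sup>2) has_field_derivative - 2 * (\<gamma>' / \<gamma> x) * (1 / (\<gamma> x)\<^sup>2)) (at x within S)"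
  using DERIV_divide[OF DERIV_const[of 1] DERIV_power[OF assms(1), of 2]] assms(2)
  by (simp add: field_simps power2_eq_square)

lemma DERIV_logarithmic_derivative:
  fixes \<gamma> :: "'a::real_normed_field \<Rightarrow> 'a"
  assumes "(\<gamma> has_field_derivative \<gamma>' x) (at x within S)"
    and "(\<gamma>' has_field_derivative \<gamma>'') (at x within S)" and "\<gamma> x \<noteq> 0"
  shows "((\<lambda>y. \<gamma>' y / \<gamma> y) has_field_derivative \<gamma>'' / \<gamma> x - (\<gamma>' x / \<gamma> x)\<^sup>2) (at x within S)"
  using DERIV_divide[OF assms(2) assms(1)] assms(3)
  by (simp add: field_simps power2_eq_square)

lemma DERIV_Riccati_difference_quotient:
  fixes w v c :: "'a::real_normed_field \<Rightarrow> 'a"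
  assumes "(w has_field_derivative w') (at x within S)"
    and "(v has_field_derivative v') (at x within S)"
    and "(c has_field_derivative c') (at x within S)"
    and "w' + (w x)\<^sup>2 = q" and "v' + (v x)\<^sup>2 = q + c x" and "w x - v x \<noteq> 0"
  shows "((\<lambda>y. c y / (w y - v y)) has_field_derivative
           c' / (w x - v x) + (w x + v x) * (c x / (w x - v x)) + (c x / (w x - v x))\<^sup>2)
         (at x within S)"
proof -
  define u where "u = w x - v x"
  have "u \<noteq> 0" using assms(6) unfolding u_def .
  have diff: "w' - v' = - (w x + v x) * u - c x"
    using assms(4,5) unfolding u_def by (simp add: algebra_simps power2_eq_square)
  have "((\<lambda>y. c y / (w y - v y)) has_field_derivative (c' * u - c x * (w' - v')) / (u * u))
          (at x within S)"
    using DERIV_divide[OF assms(3) DERIV_diff[OF assms(1,2)]] \<open>u \<noteq> 0\<close> unfolding u_def by blast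
  moreover have "(c' * u - c x * (w' - v')) / (u * u) = c' / u + (w x + v x) * (c x / u) + (c x / u)\<^sup>2"
    unfolding diff using \<open>u \<noteq> 0\<close> by (simp add: field_simps power2_eq_square)
  ultimately show ?thesis unfolding u_def by simp
qed

theorem theorem2:
  fixes V w w' v v' \<gamma> \<gamma>' \<gamma>'' :: "real \<Rightarrow> real"
    and \<epsilon> :: real and D :: "real set"
  assumes D_open: "open D"
    and w_deriv: "\<And>x. x \<in> D \<Longrightarrow> (w has_real_derivative w' x) (at x)"
    and w_riccati: "\<And>x. x \<in> D \<Longrightarrow> w' x + (w x)\<^sup>2 = V x - \<epsilon>"
    and \<gamma>_nonzero: "\<And>x. x \<in> D \<Longrightarrow> \<gamma> x \<noteq> 0"
    and \<gamma>_deriv: "\<And>x. x \<in> D \<Longrightarrow> (\<gamma> has_real_derivative \<gamma>' x) (at x)"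
    and \<gamma>'_deriv: "\<And>x. x \<in> D \<Longrightarrow> (\<gamma>' has_real_derivative \<gamma>'' x) (at x)"
    and v_deriv: "\<And>x. x \<in> D \<Longrightarrow> (v has_real_derivative v' x) (at x)"
    and v_riccati: "\<And>x. x \<in> D \<Longrightarrow> v' x + (v x)\<^sup>2 = V x + 1 / (\<gamma> x)\<^sup>2 - \<epsilon>"
    and wv_nonzero: "\<And>x. x \<in> D \<Longrightarrow> w x - v x \<noteq> 0"
  shows "\<forall>x\<in>D. \<exists>d.
           ((\<lambda>y. - v y - (1 / (\<gamma> y)\<^sup>2) / (w y - v y) + \<gamma>' y / \<gamma> y) has_real_derivative d) (at x)
         \<and> d + (- v x - (1 / (\<gamma> x)\<^sup>2) / (w x - v x) + \<gamma>' x / \<gamma> x)\<^sup>2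
             = V x - 2 * (\<gamma>' x / \<gamma> x * v x + v' x) + \<gamma>'' x / \<gamma> x - \<epsilon>"
proof
  fix x assume x: "x \<in> D"
  define c where "c = 1 / (\<gamma> x)\<^sup>2"
  define h where "h = \<gamma>' x / \<gamma> x"
  define a where "a = c / (w x - v x)"
  have v_riccati_x: "v' x + (v x)\<^sup>2 = (V x - \<epsilon>) + 1 / (\<gamma> x)\<^sup>2"
    using v_riccati[OF x] by simp
  have a_derivative: "((\<lambda>y. (1 / (\<gamma> y)\<^sup>2) / (w y - v y)) has_real_derivative
                        - 2 * h * a + (w x + v x) * a + a\<^sup>2) (at x)"
    using DERIV_Riccati_difference_quotient[OF w_deriv[OF x] v_deriv[OF x]
        DERIV_inverse_square[OF \<gamma>_deriv[OF x] \<gamma>_nonzero[OF x]] w_riccati[OF x] v_riccati_x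
      wv_nonzero[OF x]]
    unfolding c_def[symmetric] h_def[symmetric] a_def[symmetric] by (simp add: a_def)
  have "((\<lambda>y. - v y - (1 / (\<gamma> y)\<^sup>2) / (w y - v y) + \<gamma>' y / \<gamma> y) has_real_derivative
          - v' x - (- 2 * h * a + (w x + v x) * a + a\<^sup>2) + (\<gamma>'' x / \<gamma> x - h\<^sup>2)) (at x)"
    unfolding h_def
    by (intro DERIV_add DERIV_diff DERIV_minus v_deriv[OF x] a_derivative[unfolded h_def]
        DERIV_logarithmic_derivative \<gamma>_deriv[OF x] \<gamma>'_deriv[OF x] \<gamma>_nonzero[OF x])
  moreover have "a * (w x - v x) = c"
    using wv_nonzero[OF x] unfolding a_def by simp
  then have "- v' x - (- 2 * h * a + (w x + v x) * a + a\<^sup>2) + (\<gamma>'' x / \<gamma> x - h\<^sup>2)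
               + (- v x - a + h)\<^sup>2
             = V x - 2 * (h * v x + v' x) + \<gamma>'' x / \<gamma> x - \<epsilon>"
    using v_riccati[OF x] unfolding c_def[symmetric]
    by (simp add: algebra_simps power2_eq_square)
  ultimately show "\<exists>d. ((\<lambda>y. - v y - (1 / (\<gamma> y)\<^sup>2) / (w y - v y) + \<gamma>' y / \<gamma> y)
                          has_real_derivative d) (at x)
         \<and> d + (- v x - (1 / (\<gamma> x)\<^sup>2) / (w x - v x) + \<gamma>' x / \<gamma> x)\<^sup>2
             = V x - 2 * (\<gamma>' x / \<gamma> x * v x + v' x) + \<gamma>'' x / \<gamma> x - \<epsilon>"
    unfolding a_def c_def h_def by blast
qed

end
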